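(* Tijdeman's Conjecture $(\bmod~900)$ is false. That is, there exist subsets $\bar{A},\bar{B}\subseteq \mathbb{Z}/900\mathbb{Z}$ with $\bar{0}\in\bar{A}\cap\bar{B}$ such that $\bar{A}\oplus\bar{B}=\mathbb{Z}/900\mathbb{Z}$ is a factorization, $\bar{A}$ has a lifting $A\subseteq\mathbb{Z}$ with $0\in A$ and $\gcd\{a : a\in A\}=1$, and $\bar{B}$ has a lifting $B\subseteq\mathbb{Z}$ with $0\in B$ and $\gcd\{b: b\in B\}=1$.
   Context: A factorization $\bar{A}\oplus\bar{B}=G$ of a finite cyclic group $G=\mathbb{Z}/m\mathbb{Z}$ means every $g\in G$ has a unique representation $g=\bar a+\bar b$ with $\bar a\in\bar A$, $\bar b\in\bar B$. A lifting of $\bar A$ is a set $A\subseteq\mathbb{Z}$ of integer representatives, one for each element of $\bar A$ (reduction mod $m$ is a bijection $A\to\bar A$). Tijdeman's Conjecture $(\bmod~m)$ asserts: if $\bar A\oplus\bar B=\mathbb{Z}/m\mathbb{Z}$ with $\bar 0\in\bar A\cap\bar B$ and $\bar A$ lifts to a set $A\subseteq\mathbb{Z}$ with $0\in A$ and $\gcd\{a:a\in A\}=1$, then every lifting $B\subseteq\mathbb{Z}$ of $\bar B$ with $0\in B$ has $\gcd\{b:b\in B\}\neq 1$. *)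

theory Defs
  imports Main
begin

text \<open>Elements of Z/mZ are represented by their canonical residues in {0..<m}.\<close>

definition residues_of :: "int \<Rightarrow> int set" where
  "residues_of m = {0..<m}"

definition is_factorization :: "int \<Rightarrow> int set \<Rightarrow> int set \<Rightarrow> bool" where
  "is_factorization m Abar Bbar \<longleftrightarrow>
     Abar \<subseteq> residues_of m \<and> Bbar \<subseteq> residues_of m \<and>
     (\<forall>g \<in> residues_of m. \<exists>!p. p \<in> Abar \<times> Bbar \<and> (fst p + snd p) mod m = g)"

definition is_lifting :: "int \<Rightarrow> int set \<Rightarrow> int set \<Rightarrow> bool" where
  "is_lifting m Abar A \<longleftrightarrow> bij_betw (\<lambda>x. x mod m) A Abar"

end

theory Submission
  imports Defs "HOL-Library.Multiset"
begin

text \<open>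
  The counterexample is an explicit pair of 30-element sets of residues, each serving as its own
  lifting. That the 900 sums \<open>(a + b) mod 900\<close> are pairwise distinct is verified by sorting
  them, which yields exactly \<open>0, \<dots>, 899\<close>. Both liftings have greatest common divisor 1:
  \<open>A\<close> contains the coprime elements 36 and 461, and \<open>B\<close> contains 75 and 280, whose gcd 5
  does not divide the element 486 of \<open>B\<close>.
\<close>

fun merge :: "'a::linorder list \<Rightarrow> 'a list \<Rightarrow> 'a list" where
  "merge [] ys = ys"
| "merge xs [] = xs"
| "merge (x # xs) (y # ys) =
     (if x \<le> y then x # merge xs (y # ys) else y # merge (x # xs) ys)"

lemma mset_merge: "mset (merge xs ys) = mset xs + mset ys"
  by (induction xs ys rule: merge.induct) auto

text \<open>
  Merge sort rather than the library's insertion sort \<open>sort\<close>: the certificate below is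
  evaluated by the simplifier, where a quadratic sort of 900 numbers is far too slow.
\<close>

fun msort :: "'a::linorder list \<Rightarrow> 'a list" where
  "msort xs =
     (if length xs \<le> 1 then xs
      else merge (msort (take (length xs div 2) xs)) (msort (drop (length xs div 2) xs)))"

declare msort.simps [simp del]

lemma mset_msort: "mset (msort xs) = mset xs"
proof (induction xs rule: msort.induct)
  case (1 xs)
  then show ?case
    by (subst msort.simps) (simp add: mset_merge flip: mset_append)
qed

definition sums_mod :: "int \<Rightarrow> int list \<Rightarrow> int list \<Rightarrow> int list" where
  "sums_mod m as bs = map (\<lambda>(a, b). (a + b) mod m) (List.product as bs)"

lemma is_factorization_if_sums_mod_permutation:
  assumes "set as \<subseteq> residues_of m" and "set bs \<subseteq> residues_of m"
    and perm: "mset (sums_mod m as bs) = mset [0..m - 1]"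
  shows "is_factorization m (set as) (set bs)"
  unfolding is_factorization_def
proof (intro conjI ballI assms(1,2))
  let ?sum = "\<lambda>p :: int \<times> int. (fst p + snd p) mod m"
  have "distinct (sums_mod m as bs)"
    using mset_eq_imp_distinct_iff [OF perm] by simp
  then have inj: "inj_on ?sum (set as \<times> set bs)"
    by (simp add: sums_mod_def distinct_map case_prod_beta')
  have "set (sums_mod m as bs) = set [0..m - 1]"
    using perm by (rule mset_eq_setD)
  also have "\<dots> = residues_of m"
    by (auto simp: residues_of_def)
  finally have onto: "?sum ` (set as \<times> set bs) = residues_of m"
    by (simp add: sums_mod_def case_prod_beta')
  fix g
  assume "g \<in> residues_of m"
  then obtain p where p: "p \<in> set as \<times> set bs" "?sum p = g"
    by (auto simp flip: onto)
  show "\<exists>!p. p \<in> set as \<times> set bs \<and> ?sum p = g"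
  proof (rule ex1I [of _ p])
    fix q
    assume "q \<in> set as \<times> set bs \<and> ?sum q = g"
    with p show "q = p"
      using inj_onD [OF inj] by simp
  qed (use p in simp)
qed

lemma is_lifting_self:
  assumes "A \<subseteq> residues_of m"
  shows "is_lifting m A A"
proof -
  have "a mod m = a" if "a \<in> A" for a
    using assms that by (auto simp: residues_of_def)
  then show ?thesis
    unfolding is_lifting_def by (simp add: bij_betw_def inj_on_def cong: image_cong)
qed

definition A_900 :: "int list" where
  "A_900 = [0, 36, 72, 100, 108, 136, 144, 172, 200, 208, 225, 236, 244, 261, 272, 297,
            308, 325, 333, 344, 361, 369, 397, 425, 433, 461, 469, 497, 533, 569]"

definition B_900 :: "int list" where
  "B_900 = [0, 30, 60, 75, 120, 126, 150, 210, 240, 280, 306, 330, 360, 390, 420, 486,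
            510, 525, 540, 570, 580, 600, 660, 666, 690, 720, 840, 846, 870, 880]"

lemma msort_sums_mod_900: "msort (sums_mod 900 A_900 B_900) = [0..900 - 1]"
  unfolding sums_mod_def A_900_def B_900_def by code_simp

lemma A_900_residues: "set A_900 \<subseteq> residues_of 900"
  by (simp add: A_900_def residues_of_def)

lemma B_900_residues: "set B_900 \<subseteq> residues_of 900"
  by (simp add: B_900_def residues_of_def)

lemma is_factorization_900: "is_factorization 900 (set A_900) (set B_900)"
proof (rule is_factorization_if_sums_mod_permutation [OF A_900_residues B_900_residues])
  show "mset (sums_mod 900 A_900 B_900) = mset [0..900 - 1]"
    using mset_msort [of "sums_mod 900 A_900 B_900"] by (simp only: msort_sums_mod_900)
qed

theorem theorem2p1:
  shows "\<exists>Abar Bbar :: int set.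
           0 \<in> Abar \<and> 0 \<in> Bbar \<and> is_factorization 900 Abar Bbar \<and>
           (\<exists>A. is_lifting 900 Abar A \<and> 0 \<in> A \<and> Gcd A = 1) \<and>
           (\<exists>B. is_lifting 900 Bbar B \<and> 0 \<in> B \<and> Gcd B = 1)"
proof -
  have "0 \<in> set A_900" and "0 \<in> set B_900"
    by (simp_all add: A_900_def B_900_def)
  moreover have "is_lifting 900 (set A_900) (set A_900)"
    and "is_lifting 900 (set B_900) (set B_900)"
    by (intro is_lifting_self A_900_residues B_900_residues)+
  moreover have "Gcd (set A_900) = 1" and "Gcd (set B_900) = 1"
    unfolding A_900_def B_900_def by code_simp+
  ultimately show ?thesis
    using is_factorization_900 by blast
qed

end
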